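(* Let $[x,y;z]$ be a geodesic of weight $w$ with complementary weight $w'$. Then $\rho([x,y;z])$ is a geodesic if and only if $G$ contains the $R$-linear map $\sigma:U\to U$ defined by $\sigma(x)=-y$ and $\sigma(z)=z-w'y$.
   Context: Let $R$ be a commutative ring, $U$ a free rank-$2$ $R$-module with non-degenerate symplectic pairing $\langle,\rangle$, $C$ an $R$-linear involution of $U$ of determinant $-1$, and $G\subseteq\mathrm{SL}(U)$ a subgroup containing $-1$ and stable under $g\mapsto CgC$. A basis vector is an element generating a direct summand. Let $\mathscr T$ be the set of triples $[x,y;z]$ of basis vectors with $\langle x,z\rangle=\langle z,y\rangle=1$ and $x+y=wz$ for some $w\in\{1,2\}$ (the weight); the complementary weight is $w'=3-w$. Define $\rho([x,y;z])=[z,z-w'x;y]\in\mathscr T$. A triple satisfies condition (c) if there is $g\in G$ with $Cg-1=w'\langle -,x\rangle y$ and $Cg+1=w'\langle -,y\rangle x$, where $\langle -,x\rangle y$ denotes $u\mapsto\langle u,x\rangle y$; this condition is invariant under $\rho^2$. A geodesic is a class in $\mathscr T/\langle\rho^2\rangle$ satisfying (c), and $\rho$ induces a map on $\mathscr T/\langle\rho^2\rangle$. *)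

theory Defs
  imports Main
begin

text \<open>U is modelled as R x R (a free rank-2 R-module with a chosen basis);
  R is a type of class comm_ring_1.  Endomorphisms are HOL functions U => U.\<close>

type_synonym 'a vec = "'a \<times> 'a"

definition vadd :: "'a::comm_ring_1 vec \<Rightarrow> 'a vec \<Rightarrow> 'a vec" where
  "vadd u v = (fst u + fst v, snd u + snd v)"

definition vsub :: "'a::comm_ring_1 vec \<Rightarrow> 'a vec \<Rightarrow> 'a vec" where
  "vsub u v = (fst u - fst v, snd u - snd v)"

definition vneg :: "'a::comm_ring_1 vec \<Rightarrow> 'a vec" where
  "vneg u = (- fst u, - snd u)"

definition sc :: "'a::comm_ring_1 \<Rightarrow> 'a vec \<Rightarrow> 'a vec" where
  "sc r u = (r * fst u, r * snd u)"

definition lin :: "('a::comm_ring_1 vec \<Rightarrow> 'a vec) \<Rightarrow> bool" where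
  "lin f \<longleftrightarrow> (\<forall>r u v. f (vadd (sc r u) v) = vadd (sc r (f u)) (f v))"

definition det2 :: "('a::comm_ring_1 vec \<Rightarrow> 'a vec) \<Rightarrow> 'a" where
  "det2 f = fst (f (1,0)) * snd (f (0,1)) - snd (f (1,0)) * fst (f (0,1))"

definition SL :: "('a::comm_ring_1 vec \<Rightarrow> 'a vec) set" where
  "SL = {f. lin f \<and> det2 f = 1}"

definition is_subgroup :: "('a::comm_ring_1 vec \<Rightarrow> 'a vec) set \<Rightarrow> bool" where
  "is_subgroup G \<longleftrightarrow> id \<in> G \<and> (\<forall>f\<in>G. \<forall>g\<in>G. f \<circ> g \<in> G) \<and> (\<forall>g\<in>G. inv g \<in> G)"

text \<open>Non-degenerate symplectic (alternating bilinear) pairing: bilinear, alternating,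
  and u \<mapsto> <u,-> is a bijection from U onto its dual (every linear form
  v \<mapsto> a v1 + b v2 is represented by a unique u).\<close>
definition symplectic :: "('a::comm_ring_1 vec \<Rightarrow> 'a vec \<Rightarrow> 'a) \<Rightarrow> bool" where
  "symplectic B \<longleftrightarrow>
     (\<forall>r u v w. B (vadd (sc r u) v) w = r * B u w + B v w) \<and>
     (\<forall>r u v w. B w (vadd (sc r u) v) = r * B w u + B w v) \<and>
     (\<forall>u. B u u = 0) \<and>
     (\<forall>a b. \<exists>!u. \<forall>v. B u v = a * fst v + b * snd v)"

definition submodule :: "'a::comm_ring_1 vec set \<Rightarrow> bool" where
  "submodule N \<longleftrightarrow> (0,0) \<in> N \<and> (\<forall>u\<in>N. \<forall>v\<in>N. vadd u v \<in> N) \<and> (\<forall>r. \<forall>u\<in>N. sc r u \<in> N)"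

text \<open>A basis vector: x generates a direct summand R x of U, i.e. U = R x \<oplus> N.\<close>
definition basis_vec :: "'a::comm_ring_1 vec \<Rightarrow> bool" where
  "basis_vec x \<longleftrightarrow> (\<exists>N. submodule N \<and> (\<forall>u. \<exists>r n. n \<in> N \<and> u = vadd (sc r x) n)
                          \<and> (\<forall>r. sc r x \<in> N \<longrightarrow> sc r x = (0,0)))"

text \<open>Triples [x,y;z] together with their weight w: (x, y, z, w).\<close>
type_synonym 'a triple = "'a vec \<times> 'a vec \<times> 'a vec \<times> nat"

definition in_T :: "('a::comm_ring_1 vec \<Rightarrow> 'a vec \<Rightarrow> 'a) \<Rightarrow> 'a triple \<Rightarrow> bool" where
  "in_T B t = (case t of (x, y, z, w) \<Rightarrow>
     basis_vec x \<and> basis_vec y \<and> basis_vec z \<and> B x z = 1 \<and> B z y = 1 \<and>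
     w \<in> {1, 2} \<and> vadd x y = sc (of_nat w) z)"

definition rho :: "'a::comm_ring_1 triple \<Rightarrow> 'a triple" where
  "rho t = (case t of (x, y, z, w) \<Rightarrow> (z, vsub z (sc (of_nat (3 - w)) x), y, 3 - w))"

text \<open>Condition (c), with w' = 3 - w the complementary weight and Cg = C o g.\<close>
definition cond_c :: "('a::comm_ring_1 vec \<Rightarrow> 'a vec \<Rightarrow> 'a) \<Rightarrow> ('a vec \<Rightarrow> 'a vec)
      \<Rightarrow> ('a vec \<Rightarrow> 'a vec) set \<Rightarrow> 'a triple \<Rightarrow> bool" where
  "cond_c B C G t = (case t of (x, y, z, w) \<Rightarrow>
     (\<exists>g\<in>G. \<forall>u. vsub (C (g u)) u = sc (of_nat (3 - w) * B u x) y \<and>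
                 vadd (C (g u)) u = sc (of_nat (3 - w) * B u y) x))"

text \<open>A triple represents a geodesic iff it lies in T and satisfies (c)
  ((c) is invariant under rho^2, so this is a property of the class).\<close>
definition geodesic :: "('a::comm_ring_1 vec \<Rightarrow> 'a vec \<Rightarrow> 'a) \<Rightarrow> ('a vec \<Rightarrow> 'a vec)
      \<Rightarrow> ('a vec \<Rightarrow> 'a vec) set \<Rightarrow> 'a triple \<Rightarrow> bool" where
  "geodesic B C G t \<longleftrightarrow> in_T B t \<and> cond_c B C G t"

end

theory Submission
  imports Defs
begin

text \<open>Condition (c) says that \<open>C \<circ> g\<close> is the involution \<open>P\<^sub>t = 1 + w'\<langle>-,x\<rangle>y\<close> attached to
  the triple \<open>t = [x,y;z]\<close>. Given \<open>g\<close> with \<open>C \<circ> g = P\<^sub>t\<close>, an element \<open>g'\<close> with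
  \<open>C \<circ> g' = P\<^sub>\<rho>\<^sub>(\<^sub>t\<^sub>)\<close> exists iff \<open>P\<^sub>t \<circ> P\<^sub>\<rho>\<^sub>(\<^sub>t\<^sub>) = (C \<circ> g \<circ> C) \<circ> g'\<close> lies in \<open>G\<close>.
  This composite sends \<open>x \<mapsto> -y\<close> and \<open>z \<mapsto> z - w'y\<close>, and a linear map is determined by
  these two values because \<open>\<langle>x,z\<rangle> = 1\<close> makes \<open>x, z\<close> a basis. On \<open>R\<^sup>2\<close> the pairing is a
  multiple of the determinant, so all identities involved are ring computations.\<close>

lemmas vec_ops_defs = vadd_def vsub_def vneg_def sc_def

definition det_form :: "'a::comm_ring_1 vec \<Rightarrow> 'a vec \<Rightarrow> 'a" where
  "det_form u v = fst u * snd v - snd u * fst v"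

lemma symplectic_eq_scaled_det_form:
  assumes "symplectic B"
  obtains c where "\<And>u v. B u v = c * det_form u v"
proof -
  have left: "\<And>r u v w. B (vadd (sc r u) v) w = r * B u w + B v w"
   and right: "\<And>r u v w. B w (vadd (sc r u) v) = r * B w u + B w v"
   and alternating: "\<And>u. B u u = 0"
    using assms unfolding symplectic_def by blast+
  have zero_left: "B (0,0) w = 0" for w
    using left[of 1 "(0,0)" "(0,0)" w] by (simp add: vec_ops_defs)
  have zero_right: "B w (0,0) = 0" for w
    using right[of w 1 "(0,0)" "(0,0)"] by (simp add: vec_ops_defs)
  have left_sc: "B (sc r u) w = r * B u w" for r u w
    using left[of r u "(0,0)" w] zero_left by (simp add: vec_ops_defs)
  have right_sc: "B w (sc r u) = r * B w u" for r u w
    using right[of w r u "(0,0)"] zero_right by (simp add: vec_ops_defs)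
  have expand_left: "B u v = fst u * B (1,0) v + snd u * B (0,1) v" for u v
  proof -
    have "B u v = B (vadd (sc (fst u) (1,0)) (sc (snd u) (0,1))) v"
      by (simp add: vec_ops_defs)
    then show ?thesis by (simp only: left left_sc)
  qed
  have expand_right: "B v u = fst u * B v (1,0) + snd u * B v (0,1)" for u v
  proof -
    have "B v u = B v (vadd (sc (fst u) (1,0)) (sc (snd u) (0,1)))"
      by (simp add: vec_ops_defs)
    then show ?thesis by (simp only: right right_sc)
  qed
  have "0 = B (1,1) (1,1)" by (simp add: alternating)
  also have "\<dots> = B (1,0) (0,1) + B (0,1) (1,0)"
    using expand_left[of "(1,1)" "(1,1)"] expand_right[where v="(1,0)" and u="(1,1)"]
      expand_right[where v="(0,1)" and u="(1,1)"] alternating[of "(1,0)"] alternating[of "(0,1)"]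
    by simp
  finally have skew: "B (0,1) (1,0) = - B (1,0) (0,1)"
    by (simp add: eq_neg_iff_add_eq_0 add.commute)
  have "B u v = B (1,0) (0,1) * det_form u v" for u v
    using expand_left[of u v] expand_right[where v="(1,0)" and u=v] expand_right[where v="(0,1)" and u=v]
      alternating[of "(1,0)"] alternating[of "(0,1)"] skew
    by (simp add: det_form_def algebra_simps)
  then show thesis by (rule that)
qed

lemma lin_zero: "lin f \<Longrightarrow> f (0,0) = (0,0)"
proof -
  assume "lin f"
  then have "f (vadd (sc 1 (0,0)) (0,0)) = vadd (sc 1 (f (0,0))) (f (0,0))"
    unfolding lin_def by blast
  then show ?thesis by (cases "f (0,0)") (simp add: vec_ops_defs)
qed

lemma lin_sc: "lin f \<Longrightarrow> f (sc r u) = sc r (f u)"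
proof -
  assume "lin f"
  then have "f (vadd (sc r u) (0,0)) = vadd (sc r (f u)) (f (0,0))" unfolding lin_def by blast
  then show ?thesis using lin_zero[OF \<open>lin f\<close>] by (simp add: vec_ops_defs)
qed

lemma lin_combination:
  "lin f \<Longrightarrow> f (vadd (sc r a) (sc s b)) = vadd (sc r (f a)) (sc s (f b))"
  by (metis lin_def lin_sc)

lemma lin_comp: "lin f \<Longrightarrow> lin g \<Longrightarrow> lin (f \<circ> g)"
  unfolding lin_def comp_def by metis

lemma weight_mult_complement:
  "w \<in> {1, 2} \<Longrightarrow> (of_nat w * of_nat (3 - w) :: 'a::comm_ring_1) = 2"
  by auto

definition pseudo_reflection ::
    "('a::comm_ring_1 vec \<Rightarrow> 'a vec \<Rightarrow> 'a) \<Rightarrow> 'a \<Rightarrow> 'a vec \<Rightarrow> 'a vec \<Rightarrow> 'a vec \<Rightarrow> 'a vec" where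
  "pseudo_reflection B k a b u = vadd u (sc (k * B u a) b)"

definition triple_reflection :: "('a::comm_ring_1 vec \<Rightarrow> 'a vec \<Rightarrow> 'a) \<Rightarrow> 'a triple \<Rightarrow> 'a vec \<Rightarrow> 'a vec" where
  "triple_reflection B t = (case t of (x, y, z, w) \<Rightarrow> pseudo_reflection B (of_nat (3 - w)) x y)"

locale det_pairing =
  fixes B :: "'a::comm_ring_1 vec \<Rightarrow> 'a vec \<Rightarrow> 'a" and c :: 'a
  assumes pairing_eq: "B u v = c * det_form u v"
begin

lemma pairing_simps [simp]:
  "B (vadd a b) v = B a v + B b v" "B (vsub a b) v = B a v - B b v"
  "B (sc r a) v = r * B a v" "B (vneg a) v = - B a v"
  "B v (vadd a b) = B v a + B v b" "B v (vsub a b) = B v a - B v b"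
  "B v (sc r a) = r * B v a" "B v (vneg a) = - B v a" "B a a = 0"
  by (simp_all add: pairing_eq det_form_def vec_ops_defs algebra_simps)

lemma pairing_swap: "B v u = - B u v"
  by (simp add: pairing_eq det_form_def algebra_simps)

lemma pair_expansion:
  assumes "B x z = 1"
  shows "u = vadd (sc (B u z) x) (sc (- B u x) z)"
proof -
  have "sc (B x z) u = vadd (sc (B u z) x) (sc (- B u x) z)"
    by (simp add: pairing_eq det_form_def vec_ops_defs algebra_simps)
  then show ?thesis using assms by (simp add: sc_def)
qed

lemma pairing_eq_one_imp_basis_vec:
  assumes "B v b = 1"
  shows "basis_vec v"
proof -
  let ?N = "range (\<lambda>s. sc s b)"
  have "submodule ?N"
    unfolding submodule_def
  proof (intro conjI ballI allI)
    show "(0,0) \<in> ?N" by (rule range_eqI[of _ _ 0]) (simp add: sc_def)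
    show "vadd u u' \<in> ?N" if u: "u \<in> ?N" and u': "u' \<in> ?N" for u u'
    proof -
      obtain s s' where "u = sc s b" "u' = sc s' b" using u u' by blast
      then have "vadd u u' = sc (s + s') b" by (simp add: vec_ops_defs distrib_right)
      then show ?thesis by blast
    qed
    show "sc r u \<in> ?N" if u: "u \<in> ?N" for r u
    proof -
      obtain s where "u = sc s b" using u by blast
      then have "sc r u = sc (r * s) b" by (simp add: sc_def mult.assoc)
      then show ?thesis by blast
    qed
  qed
  moreover have "\<exists>r n. n \<in> ?N \<and> u = vadd (sc r v) n" for u
    using pair_expansion[OF assms, of u] by blast
  moreover have "sc r v = (0,0)" if rv: "sc r v \<in> ?N" for r
  proof -
    obtain s where "sc r v = sc s b" using rv by blast
    then have "B (sc r v) b = B (sc s b) b" by simp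
    then have "r = 0" using assms by simp
    then show ?thesis by (simp add: sc_def)
  qed
  ultimately show ?thesis unfolding basis_vec_def by blast
qed

lemma lin_eq_on_pair:
  assumes "lin f" "lin g" "B x z = 1" "f x = g x" "f z = g z"
  shows "f = g"
proof
  fix u
  have "f u = f (vadd (sc (B u z) x) (sc (- B u x) z))" using pair_expansion[OF assms(3)] by metis
  also have "\<dots> = g (vadd (sc (B u z) x) (sc (- B u x) z))"
    using assms by (simp add: lin_combination)
  finally show "f u = g u" using pair_expansion[OF assms(3)] by metis
qed

lemma lin_pseudo_reflection: "lin (pseudo_reflection B k a b)"
  unfolding lin_def pseudo_reflection_def
  by (simp add: pairing_eq det_form_def vec_ops_defs algebra_simps)

lemma pseudo_reflection_involutive:
  assumes "k * B b a = -2"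
  shows "pseudo_reflection B k a b (pseudo_reflection B k a b u) = u"
proof -
  let ?P = "pseudo_reflection B k a b" and ?m = "k * B u a"
  have "k * B (?P u) a = ?m + ?m * (k * B b a)"
    by (simp add: pseudo_reflection_def algebra_simps)
  then have "k * B (?P u) a = - ?m" using assms by simp
  then show ?thesis
    unfolding pseudo_reflection_def[of B k a b "?P u"]
    by (simp add: pseudo_reflection_def vec_ops_defs)
qed

lemma in_T_second_eq:
  assumes "in_T B (x, y, z, w)"
  shows "y = vsub (sc (of_nat w) z) x"
  using assms unfolding in_T_def
  by (cases x, cases y) (auto simp: vec_ops_defs algebra_simps)

lemma in_T_pairing_second_first:
  assumes "in_T B (x, y, z, w)"
  shows "B y x = - of_nat w"
proof -
  have "B x z = 1" using assms unfolding in_T_def by simp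
  then show ?thesis using in_T_second_eq[OF assms] by (simp add: pairing_swap[of z x])
qed

lemma triple_reflection_alt:
  assumes "in_T B (x, y, z, w)"
  shows "triple_reflection B (x, y, z, w) u = vsub (sc (of_nat (3 - w) * B u y) x) u"
proof -
  have xz: "B x z = 1" and w: "w \<in> {1, 2}" using assms unfolding in_T_def by auto
  define p q where "p = B u z" and "q = B u x"
  have u: "u = vadd (sc p x) (sc (- q) z)" using pair_expansion[OF xz] unfolding p_def q_def .
  have "triple_reflection B (x, y, z, w) u = vadd u (sc (of_nat (3 - w) * q) y)"
    by (simp add: triple_reflection_def pseudo_reflection_def q_def)
  also have "\<dots> = vsub (sc (of_nat (3 - w) * (of_nat w * p - q)) x) u"
    using w u in_T_second_eq[OF assms]
    by (cases x, cases z) (auto simp: vec_ops_defs algebra_simps)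
  also have "of_nat w * p - q = B u y"
    using in_T_second_eq[OF assms] unfolding p_def q_def by simp
  finally show ?thesis .
qed

lemma cond_c_iff_triple_reflection:
  assumes "in_T B (x, y, z, w)"
  shows "cond_c B C G (x, y, z, w) \<longleftrightarrow> (\<exists>g\<in>G. C \<circ> g = triple_reflection B (x, y, z, w))"
proof -
  have first: "vsub v u = sc (of_nat (3 - w) * B u x) y \<longleftrightarrow> v = triple_reflection B (x, y, z, w) u"
    for v u
    by (cases v) (auto simp: triple_reflection_def pseudo_reflection_def vec_ops_defs algebra_simps)
  have second: "vadd v u = sc (of_nat (3 - w) * B u y) x \<longleftrightarrow> v = triple_reflection B (x, y, z, w) u"
    for v u
    unfolding triple_reflection_alt[OF assms]
    by (cases v) (auto simp: vec_ops_defs algebra_simps)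
  show ?thesis
    unfolding cond_c_def prod.case first second by (simp add: fun_eq_iff)
qed

lemma triple_reflection_involutive:
  assumes "in_T B (x, y, z, w)"
  shows "triple_reflection B (x, y, z, w) \<circ> triple_reflection B (x, y, z, w) = id"
proof -
  have "w \<in> {1, 2}" using assms unfolding in_T_def by simp
  then have "of_nat (3 - w) * B y x = -2"
    using in_T_pairing_second_first[OF assms] weight_mult_complement[of w] by (simp add: algebra_simps)
  then show ?thesis
    by (simp add: fun_eq_iff triple_reflection_def pseudo_reflection_involutive)
qed

lemma rho_in_T:
  assumes "in_T B (x, y, z, w)"
  shows "in_T B (rho (x, y, z, w))"
proof -
  let ?W' = "of_nat (3 - w)"
  have basis: "basis_vec y" "basis_vec z" and zy: "B z y = 1" and w: "w \<in> {1, 2}"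
    using assms unfolding in_T_def by auto
  have y_eq: "y = vsub (sc (of_nat w) z) x" and yx: "B y x = - of_nat w"
    using in_T_second_eq[OF assms] in_T_pairing_second_first[OF assms] .
  have "B y z = -1" using zy pairing_swap[of y z] by (simp add: minus_equation_iff)
  then have "B y (vsub z (sc ?W' x)) = 1"
    using yx w by auto
  then have "B (vsub z (sc ?W' x)) (vneg y) = 1"
    by (simp add: pairing_swap[of y])
  then have "basis_vec (vsub z (sc ?W' x))" by (rule pairing_eq_one_imp_basis_vec)
  moreover have "vadd z (vsub z (sc ?W' x)) = sc ?W' y"
    using w y_eq by (cases x, cases z) (auto simp: vec_ops_defs algebra_simps)
  ultimately show ?thesis
    using basis zy \<open>B y (vsub z (sc ?W' x)) = 1\<close> w unfolding in_T_def rho_def by auto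
qed

lemma composite_reflection_iff:
  assumes "in_T B (x, y, z, w)"
  shows "lin \<sigma> \<and> \<sigma> x = vneg y \<and> \<sigma> z = vsub z (sc (of_nat (3 - w)) y) \<longleftrightarrow>
    \<sigma> = triple_reflection B (x, y, z, w) \<circ> triple_reflection B (rho (x, y, z, w))"
    (is "_ \<longleftrightarrow> \<sigma> = ?P \<circ> ?P'")
proof -
  have xz: "B x z = 1" and w: "w \<in> {1, 2}" using assms unfolding in_T_def by auto
  have y_eq: "y = vsub (sc (of_nat w) z) x" and yx: "B y x = - of_nat w"
    using in_T_second_eq[OF assms] in_T_pairing_second_first[OF assms] .
  have zx: "B z x = -1" using xz pairing_swap[of z x] by simp
  have "?P' x = y"
    using w xz y_eq unfolding rho_def triple_reflection_def pseudo_reflection_def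
    by (cases x, cases z) (auto simp: vec_ops_defs algebra_simps)
  then have x_image: "(?P \<circ> ?P') x = vneg y"
    using w yx unfolding triple_reflection_def pseudo_reflection_def
    by (cases y) (auto simp: vec_ops_defs algebra_simps)
  have "?P' z = z"
    unfolding rho_def triple_reflection_def pseudo_reflection_def by (simp add: vec_ops_defs)
  then have z_image: "(?P \<circ> ?P') z = vsub z (sc (of_nat (3 - w)) y)"
    using zx unfolding triple_reflection_def pseudo_reflection_def
    by (cases y, cases z) (simp add: vec_ops_defs)
  have "lin (?P \<circ> ?P')"
    unfolding triple_reflection_def rho_def by (simp add: lin_comp lin_pseudo_reflection)
  then show ?thesis
    using x_image z_image lin_eq_on_pair[OF _ _ xz] by metis
qed

end

lemma conj_stable_subgroup_factor_iff:
  assumes "is_subgroup G" "\<forall>g\<in>G. C \<circ> g \<circ> C \<in> G"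
    and "g \<in> G" "C \<circ> g = P" "P \<circ> P = id"
  shows "(\<exists>g'\<in>G. C \<circ> g' = Q) \<longleftrightarrow> P \<circ> Q \<in> G"
proof
  have comp_closed: "f \<circ> h \<in> G" if "f \<in> G" "h \<in> G" for f h
    using assms(1) that unfolding is_subgroup_def by blast
  show "P \<circ> Q \<in> G" if factor: "\<exists>g'\<in>G. C \<circ> g' = Q"
  proof -
    obtain g' where "g' \<in> G" "C \<circ> g' = Q" using factor by blast
    then have "P \<circ> Q = (C \<circ> g \<circ> C) \<circ> g'" using assms(4) by (simp add: comp_assoc)
    then show ?thesis using comp_closed assms(2,3) \<open>g' \<in> G\<close> by simp
  qed
  show "\<exists>g'\<in>G. C \<circ> g' = Q" if "P \<circ> Q \<in> G"
  proof
    show "g \<circ> (P \<circ> Q) \<in> G" using comp_closed assms(3) that by blast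
    show "C \<circ> (g \<circ> (P \<circ> Q)) = Q" using assms(4,5) by (simp add: comp_assoc[symmetric])
  qed
qed

theorem lemma4p1:
  fixes B :: "'a::comm_ring_1 vec \<Rightarrow> 'a vec \<Rightarrow> 'a"
    and C :: "'a vec \<Rightarrow> 'a vec"
    and G :: "('a vec \<Rightarrow> 'a vec) set"
    and x y z :: "'a vec" and w :: nat
  assumes "symplectic B"
    and "lin C" and "C \<circ> C = id" and "det2 C = -1"
    and "G \<subseteq> SL" and "is_subgroup G" and "vneg \<in> G"
    and "\<forall>g\<in>G. C \<circ> g \<circ> C \<in> G"
    and "geodesic B C G (x, y, z, w)"
  shows "geodesic B C G (rho (x, y, z, w)) \<longleftrightarrow>
    (\<exists>\<sigma>\<in>G. lin \<sigma> \<and> \<sigma> x = vneg y \<and> \<sigma> z = vsub z (sc (of_nat (3 - w)) y))"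
proof -
  obtain c where "\<And>u v. B u v = c * det_form u v"
    using symplectic_eq_scaled_det_form[OF assms(1)] by blast
  then interpret det_pairing B c by unfold_locales
  let ?P = "triple_reflection B (x, y, z, w)" and ?P' = "triple_reflection B (rho (x, y, z, w))"
  have T: "in_T B (x, y, z, w)" and "cond_c B C G (x, y, z, w)"
    using assms(9) unfolding geodesic_def by auto
  then obtain g where "g \<in> G" "C \<circ> g = ?P"
    by (auto simp: cond_c_iff_triple_reflection)
  have "rho (x, y, z, w) = (z, vsub z (sc (of_nat (3 - w)) x), y, 3 - w)"
    by (simp add: rho_def)
  then have "geodesic B C G (rho (x, y, z, w)) \<longleftrightarrow> (\<exists>g'\<in>G. C \<circ> g' = ?P')"
    using rho_in_T[OF T] unfolding geodesic_def by (simp add: cond_c_iff_triple_reflection)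
  also have "\<dots> \<longleftrightarrow> ?P \<circ> ?P' \<in> G"
    using conj_stable_subgroup_factor_iff[OF assms(6,8) \<open>g \<in> G\<close> \<open>C \<circ> g = ?P\<close>]
      triple_reflection_involutive[OF T] by blast
  also have "\<dots> \<longleftrightarrow> (\<exists>\<sigma>\<in>G. lin \<sigma> \<and> \<sigma> x = vneg y \<and> \<sigma> z = vsub z (sc (of_nat (3 - w)) y))"
    unfolding composite_reflection_iff[OF T] by blast
  finally show ?thesis .
qed

end
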